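(* Let $\mathbb{K}$ be a topological field, $d\in\mathbb{N}$, $F$ a topological $\mathbb{K}$-vector space, $U\subseteq\mathbb{K}^d$ open or of the form $U_1\times\cdots\times U_d$ with $U_i\subseteq\mathbb{K}$ having dense interior, $f\colon U\to F$, and $k\in\mathbb{N}_0$. Let $e_1,\ldots,e_d$ denote the standard unit multi-indices. (a) If $f$ is $C^1_{SDS}$ and $f^{<e_i>}$ is $C^k_{SDS}$ for each $i\in\{1,\ldots,d\}$, then $f$ is $C^{k+1}_{SDS}$. (b) Let $\mathbb{K}$ be a valued field and $\sigma>0$. If $f$ is $C^{1,\sigma}_{SDS}$ and $f^{<e_i>}$ is $C^{k,\sigma}_{SDS}$ for each $i\in\{1,\ldots,d\}$, then $f$ is $C^{k+1,\sigma}_{SDS}$.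
   Context: Topological fields are Hausdorff and non-discrete, vector spaces Hausdorff; a valued field is a field with absolute value defining a non-discrete topology. For $\alpha\in\mathbb{N}_0^d$, $|\alpha|=\sum\alpha_i$; write $x\in\mathbb{K}^{d+|\alpha|}$ as $(x^{(1)},\ldots,x^{(d)})$, $x^{(i)}=(x^{(i)}_0,\ldots,x^{(i)}_{\alpha_i})$. $U^{<\alpha>}$: all $x$ with $(x^{(1)}_{i_1},\ldots,x^{(d)}_{i_d})\in U$ for all $0\le i_\ell\le\alpha_\ell$; $U^{>\alpha<}$: those with $x^{(i)}_j\neq x^{(i)}_k$ for $j\neq k$. $f^{>0<}=f$, and for $|\alpha|\ge1$, $f^{>\alpha<}(x)=\sum_{j_1=0}^{\alpha_1}\cdots\sum_{j_d=0}^{\alpha_d}\big(\prod_{\ell=1}^d\prod_{k_\ell\neq j_\ell}(x^{(\ell)}_{j_\ell}-x^{(\ell)}_{k_\ell})^{-1}\big)f(x^{(1)}_{j_1},\ldots,x^{(d)}_{j_d})$ on $U^{>\alpha<}$. $f$ is $C^0_{SDS}$ if continuous ($f^{<0>}:=f$); $C^k_{SDS}$ if $C^{k-1}_{SDS}$ and for all $|\alpha|=k$, $f^{>\alpha<}$ has a continuous extension $f^{<\alpha>}$ to $U^{<\alpha>}$. The same definitions apply to maps on $U^{<e_i>}\subseteq\mathbb{K}^{d+1}$ (which is open, resp. a product of sets with dense interior). Gauge on a topological vector space $E$ over a valued field: $q\colon E\to[0,\infty[$, $q(tx)=|t|q(x)$, all balls $\{q<r\}$ are $0$-neighbourhoods.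 A map $g$ on a subset $V\subseteq E$ is $C^{0,\sigma}$ if for each $x_0\in V$ and gauge $q$ on $F$ there are a gauge $p$ on $E$ and a neighbourhood $W$ of $x_0$ in $V$ with $q(g(y)-g(x))\le p(y-x)^\sigma$ for $x,y\in W$. $f$ is $C^{k,\sigma}_{SDS}$ if $C^k_{SDS}$ and all $f^{<\alpha>}$, $|\alpha|\le k$, are $C^{0,\sigma}$. *)

theory Defs
  imports "HOL-Analysis.Analysis"
begin

text \<open>The variables of a function of several variables are indexed by
an arbitrary finite index set I (for K^d: I = {..<d}); a point of K^I is an
extensional function in PiE I UNIV, with the product topology. A multi-index is
alpha :: 'a => nat (only its values on I matter), |alpha| = sum alpha I. A point
of K^{d+|alpha|} is an extensional function on SIGMA i:I. {..alpha i}, with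
x (i,j) standing for x^{(i)}_j.\<close>

definition prodtop :: "'a set \<Rightarrow> ('a \<Rightarrow> 'k::topological_space) topology" where
  "prodtop I = product_topology (\<lambda>_. euclidean) I"

definition topological_field :: "'k::{field,t2_space} itself \<Rightarrow> bool" where
  "topological_field _ \<longleftrightarrow>
     continuous_on UNIV (\<lambda>p::'k\<times>'k. fst p + snd p) \<and>
     continuous_on UNIV (\<lambda>p::'k\<times>'k. fst p * snd p) \<and>
     continuous_on UNIV (uminus :: 'k \<Rightarrow> 'k) \<and>
     continuous_on (-{0}) (inverse :: 'k \<Rightarrow> 'k) \<and>
     \<not> (\<forall>S::'k set. open S)"

definition tvs :: "('k::{field,t2_space} \<Rightarrow> 'f::{ab_group_add,t2_space} \<Rightarrow> 'f) \<Rightarrow> bool" where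
  "tvs smul \<longleftrightarrow> Vector_Spaces.vector_space smul \<and>
     continuous_on UNIV (\<lambda>p::'f\<times>'f. fst p + snd p) \<and>
     continuous_on UNIV (\<lambda>p::'k\<times>'f. smul (fst p) (snd p))"

definition valued_field :: "('k::{field,topological_space} \<Rightarrow> real) \<Rightarrow> bool" where
  "valued_field av \<longleftrightarrow>
     (\<forall>x. 0 \<le> av x) \<and> (\<forall>x. av x = 0 \<longleftrightarrow> x = 0) \<and>
     (\<forall>x y. av (x * y) = av x * av y) \<and> (\<forall>x y. av (x + y) \<le> av x + av y) \<and>
     (\<forall>S::'k set. open S \<longleftrightarrow> (\<forall>x\<in>S. \<exists>r>0. \<forall>y. av (y - x) < r \<longrightarrow> y \<in> S))"

definition unitmi :: "'a \<Rightarrow> 'a \<Rightarrow> nat" where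
  "unitmi i = (\<lambda>l. if l = i then 1 else 0)"

definition sds_lt :: "'a set \<Rightarrow> ('a \<Rightarrow> nat) \<Rightarrow> ('a \<Rightarrow> 'k) set \<Rightarrow> ('a \<times> nat \<Rightarrow> 'k) set" where
  "sds_lt I \<alpha> U = {x \<in> PiE (SIGMA i:I. {..\<alpha> i}) (\<lambda>_. UNIV).
      \<forall>j \<in> PiE I (\<lambda>i. {..\<alpha> i}). (\<lambda>i\<in>I. x (i, j i)) \<in> U}"

definition sds_gt :: "'a set \<Rightarrow> ('a \<Rightarrow> nat) \<Rightarrow> ('a \<Rightarrow> 'k) set \<Rightarrow> ('a \<times> nat \<Rightarrow> 'k) set" where
  "sds_gt I \<alpha> U = {x \<in> sds_lt I \<alpha> U.
      \<forall>i\<in>I. \<forall>j\<le>\<alpha> i. \<forall>l\<le>\<alpha> i. j \<noteq> l \<longrightarrow> x (i, j) \<noteq> x (i, l)}"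

definition sds_dd :: "('k::field \<Rightarrow> 'f \<Rightarrow> 'f::ab_group_add) \<Rightarrow> 'a set \<Rightarrow> ('a \<Rightarrow> nat)
    \<Rightarrow> (('a \<Rightarrow> 'k) \<Rightarrow> 'f) \<Rightarrow> ('a \<times> nat \<Rightarrow> 'k) \<Rightarrow> 'f" where
  "sds_dd smul I \<alpha> f x =
     (\<Sum>j\<in>PiE I (\<lambda>i. {..\<alpha> i}).
        smul (\<Prod>l\<in>I. \<Prod>m\<in>{..\<alpha> l} - {j l}. inverse (x (l, j l) - x (l, m)))
              (f (\<lambda>i\<in>I. x (i, j i))))"

fun sds_C :: "('k::{field,topological_space} \<Rightarrow> 'f \<Rightarrow> 'f::{ab_group_add,topological_space})
    \<Rightarrow> 'a set \<Rightarrow> ('a \<Rightarrow> 'k) set \<Rightarrow> (('a \<Rightarrow> 'k) \<Rightarrow> 'f) \<Rightarrow> nat \<Rightarrow> bool" where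
  "sds_C smul I U f 0 = continuous_map (subtopology (prodtop I) U) euclidean f"
| "sds_C smul I U f (Suc k) = (sds_C smul I U f k \<and>
     (\<forall>\<alpha>. sum \<alpha> I = Suc k \<longrightarrow>
        (\<exists>g. continuous_map (subtopology (prodtop (SIGMA i:I. {..\<alpha> i})) (sds_lt I \<alpha> U)) euclidean g
             \<and> (\<forall>x\<in>sds_gt I \<alpha> U. g x = sds_dd smul I \<alpha> f x))))"

definition sds_ext :: "('k::{field,topological_space} \<Rightarrow> 'f \<Rightarrow> 'f::{ab_group_add,topological_space})
    \<Rightarrow> 'a set \<Rightarrow> ('a \<Rightarrow> 'k) set \<Rightarrow> (('a \<Rightarrow> 'k) \<Rightarrow> 'f) \<Rightarrow> ('a \<Rightarrow> nat) \<Rightarrow> ('a \<times> nat \<Rightarrow> 'k) \<Rightarrow> 'f" where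
  "sds_ext smul I U f \<alpha> = (SOME g.
     continuous_map (subtopology (prodtop (SIGMA i:I. {..\<alpha> i})) (sds_lt I \<alpha> U)) euclidean g
     \<and> (\<forall>x\<in>sds_gt I \<alpha> U. g x = sds_dd smul I \<alpha> f x))"

definition gaugeF :: "('k \<Rightarrow> real) \<Rightarrow> ('k \<Rightarrow> 'f \<Rightarrow> 'f::{zero,topological_space}) \<Rightarrow> ('f \<Rightarrow> real) \<Rightarrow> bool" where
  "gaugeF av smul q \<longleftrightarrow> (\<forall>x. 0 \<le> q x) \<and> (\<forall>t x. q (smul t x) = av t * q x) \<and>
     (\<forall>r>0. \<exists>S. open S \<and> 0 \<in> S \<and> S \<subseteq> {x. q x < r})"

definition gaugeE :: "('k::{field,topological_space} \<Rightarrow> real) \<Rightarrow> 'b set \<Rightarrow> (('b \<Rightarrow> 'k) \<Rightarrow> real) \<Rightarrow> bool" where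
  "gaugeE av J p \<longleftrightarrow> (\<forall>x\<in>PiE J (\<lambda>_. UNIV). 0 \<le> p x) \<and>
     (\<forall>t. \<forall>x\<in>PiE J (\<lambda>_. UNIV). p (\<lambda>j\<in>J. t * x j) = av t * p x) \<and>
     (\<forall>r>0. \<exists>S. openin (prodtop J) S \<and> (\<lambda>j\<in>J. 0) \<in> S \<and> (\<forall>x\<in>S. p x < r))"

definition holder :: "('k::{field,topological_space} \<Rightarrow> real) \<Rightarrow> ('k \<Rightarrow> 'f \<Rightarrow> 'f::{ab_group_add,topological_space})
    \<Rightarrow> 'b set \<Rightarrow> ('b \<Rightarrow> 'k) set \<Rightarrow> (('b \<Rightarrow> 'k) \<Rightarrow> 'f) \<Rightarrow> real \<Rightarrow> bool" where
  "holder av smul J V g \<sigma> \<longleftrightarrow> (\<forall>x0\<in>V. \<forall>q. gaugeF av smul q \<longrightarrow>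
     (\<exists>p W. gaugeE av J p \<and> W \<subseteq> V \<and> (\<exists>N. openin (prodtop J) N \<and> x0 \<in> N \<and> N \<inter> V \<subseteq> W) \<and>
        (\<forall>x\<in>W. \<forall>y\<in>W. q (g y - g x) \<le> p (\<lambda>j\<in>J. y j - x j) powr \<sigma>)))"

text \<open>C^{k,sigma}_SDS (f^{<0>} = f)\<close>
definition sds_CH :: "('k::{field,topological_space} \<Rightarrow> real) \<Rightarrow> ('k \<Rightarrow> 'f \<Rightarrow> 'f::{ab_group_add,topological_space})
    \<Rightarrow> 'a set \<Rightarrow> ('a \<Rightarrow> 'k) set \<Rightarrow> (('a \<Rightarrow> 'k) \<Rightarrow> 'f) \<Rightarrow> nat \<Rightarrow> real \<Rightarrow> bool" where
  "sds_CH av smul I U f k \<sigma> \<longleftrightarrow> sds_C smul I U f k \<and> holder av smul I U f \<sigma> \<and>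
     (\<forall>\<alpha>. 1 \<le> sum \<alpha> I \<and> sum \<alpha> I \<le> k \<longrightarrow>
        holder av smul (SIGMA i:I. {..\<alpha> i}) (sds_lt I \<alpha> U) (sds_ext smul I U f \<alpha>) \<sigma>)"

end

theory Submission
  imports Defs
begin

text \<open>
  Let |\<alpha>| \<ge> 2 and pick i with \<alpha>_i \<ge> 1. Splitting the i-th block of variables of
  x \<in> U^{<\<alpha>>} into x^{(i)}_0 and x^{(i)}_1, ..., x^{(i)}_{\<alpha>_i} turns x into a point x' of
  (U^{<e_i>})^{<\<beta>>}, where \<beta> gives the first part order 0 and the second order \<alpha>_i - 1, so
  |\<beta>| = |\<alpha>| - 1. The recursion for univariate divided differences, which comes from the partial
  fraction decomposition of 1 / \<Prod>_m (t - y_m), gives f^{>\<alpha><}(x) = (f^{>e_i<})^{>\<beta><}(x') on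
  U^{>\<alpha><}. Every coordinate of x' is a coordinate of x, so x \<mapsto> (f^{<e_i>})^{<\<beta>>}(x') is a
  continuous extension of f^{>\<alpha><} and inherits Hoelder estimates from (f^{<e_i>})^{<\<beta>>}; this
  proves (a). For (b) this extension must be identified with f^{<\<alpha>>}: continuous extensions into
  the Hausdorff space F are unique because U^{>\<alpha><} is dense in U^{<\<alpha>>}, which is the only place
  where the hypotheses on the field and on U are used.
\<close>

section \<open>Partial fractions and univariate divided differences\<close>

lemma inverse_partial_fraction_step:
  fixes t b c P :: "'k::field"
  assumes "t \<noteq> c" "t \<noteq> b" "b \<noteq> c" "P \<noteq> 0"
  shows "inverse (t - c) * inverse ((c - b) * P) + inverse ((t - b) * ((b - c) * P))
       = inverse (t - c) * inverse ((t - b) * P)"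
proof -
  have nz: "c - b \<noteq> 0" "t - c \<noteq> 0" "t - b \<noteq> 0" using assms by auto
  have resolvent: "inverse (t - c) - inverse (t - b) = (c - b) * (inverse (t - c) * inverse (t - b))"
    using nz by (simp add: field_simps)
  have a1: "inverse ((c - b) * P) = inverse (c - b) * inverse P"
    by (simp add: inverse_mult_distrib)
  have "inverse (b - c) = - inverse (c - b)"
    by (metis inverse_minus_eq minus_diff_eq)
  then have a2: "inverse ((t - b) * ((b - c) * P)) = - (inverse (t - b) * inverse (c - b) * inverse P)"
    by (simp add: inverse_mult_distrib)
  have "inverse (t - c) * inverse ((c - b) * P) + inverse ((t - b) * ((b - c) * P))
      = (inverse (t - c) - inverse (t - b)) * inverse (c - b) * inverse P"
    unfolding a1 a2 by (simp add: algebra_simps)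
  also have "\<dots> = ((c - b) * inverse (c - b)) * (inverse (t - c) * (inverse (t - b) * inverse P))"
    unfolding resolvent by (simp add: ac_simps)
  also have "\<dots> = inverse (t - c) * inverse ((t - b) * P)"
    using nz by (simp add: inverse_mult_distrib)
  finally show ?thesis .
qed

lemma sum_inverse_partial_fractions:
  fixes y :: "'b \<Rightarrow> 'k::field"
  assumes "finite B" "B \<noteq> {}" "inj_on y B" "t \<notin> y ` B"
  shows "(\<Sum>b\<in>B. inverse ((t - y b) * (\<Prod>m\<in>B - {b}. y b - y m))) = inverse (\<Prod>m\<in>B. t - y m)"
  using assms
proof (induction B arbitrary: t rule: finite_ne_induct)
  case (singleton b)
  then show ?case by simp
next
  case (insert c B)
  define P where "P b = (\<Prod>m\<in>B - {b}. y b - y m)" for b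
  have inj: "inj_on y B" and cB: "y c \<notin> y ` B" and tB: "t \<notin> y ` B"
    using insert by auto
  have IHc: "(\<Sum>b\<in>B. inverse ((y c - y b) * P b)) = inverse (\<Prod>m\<in>B. y c - y m)"
    and IHt: "(\<Sum>b\<in>B. inverse ((t - y b) * P b)) = inverse (\<Prod>m\<in>B. t - y m)"
    using insert.IH[OF inj cB] insert.IH[OF inj tB] unfolding P_def by simp_all
  have P_nz: "P b \<noteq> 0" if "b \<in> B" for b
    unfolding P_def using that inj insert.hyps by (auto simp: inj_on_def)
  have P_insert: "(\<Prod>m\<in>insert c B - {b}. y b - y m) = (y b - y c) * P b" if "b \<in> B" for b
  proof -
    have "insert c B - {b} = insert c (B - {b})" using that insert.hyps by auto
    then show ?thesis unfolding P_def using insert.hyps by simp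
  qed
  have "insert c B - {c} = B" using insert.hyps by auto
  then have "(\<Sum>b\<in>insert c B. inverse ((t - y b) * (\<Prod>m\<in>insert c B - {b}. y b - y m)))
      = inverse ((t - y c) * (\<Prod>m\<in>B. y c - y m)) + (\<Sum>b\<in>B. inverse ((t - y b) * ((y b - y c) * P b)))"
    using insert.hyps P_insert by simp
  also have "\<dots> = inverse (t - y c) * (\<Sum>b\<in>B. inverse ((y c - y b) * P b))
        + (\<Sum>b\<in>B. inverse ((t - y b) * ((y b - y c) * P b)))"
    unfolding IHc by (simp only: inverse_mult_distrib)
  also have "\<dots> = (\<Sum>b\<in>B. inverse (t - y c) * inverse ((t - y b) * P b))"
    unfolding sum_distrib_left sum.distrib[symmetric]
  proof (rule sum.cong[OF refl])
    fix b assume b: "b \<in> B"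
    have "t \<noteq> y c" "t \<noteq> y b" using insert.prems b by auto
    moreover have "y b \<noteq> y c" using cB b by (metis imageI)
    ultimately show "inverse (t - y c) * inverse ((y c - y b) * P b) + inverse ((t - y b) * ((y b - y c) * P b))
        = inverse (t - y c) * inverse ((t - y b) * P b)"
      by (rule inverse_partial_fraction_step[OF _ _ _ P_nz[OF b]])
  qed
  also have "\<dots> = inverse (t - y c) * (\<Sum>b\<in>B. inverse ((t - y b) * P b))"
    by (simp only: sum_distrib_left)
  also have "\<dots> = inverse (\<Prod>m\<in>insert c B. t - y m)"
    unfolding IHt using insert.hyps by (simp add: inverse_mult_distrib)
  finally show ?case .
qed

lemma (in vector_space) divided_difference_recursion:
  assumes "inj_on x {..Suc n}"
  shows "(\<Sum>a\<le>Suc n. scale (\<Prod>m\<in>{..Suc n} - {a}. inverse (x a - x m)) (h a))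
      = (\<Sum>b\<le>n. scale (\<Prod>m\<in>{..n} - {b}. inverse (x (Suc b) - x (Suc m)))
              (scale (inverse (x 0 - x (Suc b))) (h 0) + scale (inverse (x (Suc b) - x 0)) (h (Suc b))))"
proof -
  define w where "w b = (\<Prod>m\<in>{..n} - {b}. inverse (x (Suc b) - x (Suc m)))" for b
  have weight_Suc: "(\<Prod>m\<in>{..Suc n} - {Suc b}. inverse (x (Suc b) - x m)) = w b * inverse (x (Suc b) - x 0)"
    if "b \<le> n" for b
  proof -
    have "{..Suc n} - {Suc b} = insert 0 (Suc ` ({..n} - {b}))"
      unfolding atMost_Suc_eq_insert_0 by (auto simp: image_set_diff[symmetric])
    then show ?thesis unfolding w_def by (simp add: prod.reindex mult.commute)
  qed
  have weight_0: "(\<Sum>b\<le>n. w b * inverse (x 0 - x (Suc b))) = (\<Prod>m\<in>{..Suc n} - {0}. inverse (x 0 - x m))"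
  proof -
    have inj: "inj_on (\<lambda>m. x (Suc m)) {..n}" and x0: "x 0 \<notin> (\<lambda>m. x (Suc m)) ` {..n}"
      using assms by (auto simp: inj_on_def)
    have "{..Suc n} - {0} = Suc ` {..n}" unfolding atMost_Suc_eq_insert_0 by auto
    then have "(\<Prod>m\<in>{..Suc n} - {0}. inverse (x 0 - x m)) = inverse (\<Prod>m\<le>n. x 0 - x (Suc m))"
      by (simp add: prod.reindex prod_inversef[symmetric] comp_def)
    then show ?thesis
      using sum_inverse_partial_fractions[OF _ _ inj x0]
      by (simp add: w_def inverse_mult_distrib mult.commute prod_inversef[symmetric] comp_def)
  qed
  have "(\<Sum>b\<le>n. scale (w b) (scale (inverse (x 0 - x (Suc b))) (h 0) + scale (inverse (x (Suc b) - x 0)) (h (Suc b))))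
     = scale (\<Sum>b\<le>n. w b * inverse (x 0 - x (Suc b))) (h 0)
       + (\<Sum>b\<le>n. scale (w b * inverse (x (Suc b) - x 0)) (h (Suc b)))"
    by (simp add: scale_right_distrib sum.distrib scale_sum_left)
  also have "\<dots> = scale (\<Prod>m\<in>{..Suc n} - {0}. inverse (x 0 - x m)) (h 0)
       + (\<Sum>b\<le>n. scale (\<Prod>m\<in>{..Suc n} - {Suc b}. inverse (x (Suc b) - x m)) (h (Suc b)))"
    unfolding weight_0 by (simp add: weight_Suc)
  also have "\<dots> = (\<Sum>a\<le>Suc n. scale (\<Prod>m\<in>{..Suc n} - {a}. inverse (x a - x m)) (h a))"
    by (simp only: sum.atMost_Suc_shift)
  finally show ?thesis unfolding w_def by (rule sym)
qed

section \<open>Divided differences in several variables\<close>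

definition dd_weight :: "('i \<Rightarrow> nat) \<Rightarrow> ('i \<times> nat \<Rightarrow> 'k::field) \<Rightarrow> 'i \<Rightarrow> nat \<Rightarrow> 'k" where
  "dd_weight \<alpha> x l a = (\<Prod>m\<in>{..\<alpha> l} - {a}. inverse (x (l, a) - x (l, m)))"

lemma sds_dd_eq_dd_weight:
  "sds_dd smul I \<alpha> f x
     = (\<Sum>j\<in>PiE I (\<lambda>l. {..\<alpha> l}). smul (\<Prod>l\<in>I. dd_weight \<alpha> x l (j l)) (f (\<lambda>l\<in>I. x (l, j l))))"
  unfolding sds_dd_def dd_weight_def ..

lemma (in vector_space) sds_dd_split_coordinate:
  assumes "finite I" "i \<in> I"
  shows "sds_dd scale I \<alpha> f x
     = (\<Sum>g\<in>PiE (I - {i}) (\<lambda>l. {..\<alpha> l}). scale (\<Prod>l\<in>I - {i}. dd_weight \<alpha> x l (g l))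
          (\<Sum>a\<le>\<alpha> i. scale (dd_weight \<alpha> x i a) (f (\<lambda>l\<in>I. x (l, (g(i := a)) l)))))"
proof -
  let ?P = "PiE (I - {i}) (\<lambda>l. {..\<alpha> l})"
  have PiE_I: "PiE I (\<lambda>l. {..\<alpha> l}) = (\<lambda>(a, g). g(i := a)) ` ({..\<alpha> i} \<times> ?P)"
    using PiE_insert_eq[of i "I - {i}" "\<lambda>l. {..\<alpha> l}"] assms(2) by (simp add: insert_absorb)
  have inj: "inj_on (\<lambda>(a, g). g(i := a)) ({..\<alpha> i} \<times> ?P)"
  proof (rule inj_onI, clarsimp)
    fix a g a' g' assume g: "g \<in> ?P" and g': "g' \<in> ?P" and eq: "g(i := a) = g'(i := a')"
    show "a = a' \<and> g = g'"
    proof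
      show "a = a'" using fun_cong[OF eq, of i] by simp
      show "g = g'"
      proof
        fix l show "g l = g' l"
          using fun_cong[OF eq, of l] PiE_arb[OF g, of i] PiE_arb[OF g', of i] by (cases "l = i") auto
      qed
    qed
  qed
  have weight: "(\<Prod>l\<in>I. dd_weight \<alpha> x l ((g(i := a)) l))
      = (\<Prod>l\<in>I - {i}. dd_weight \<alpha> x l (g l)) * dd_weight \<alpha> x i a" for g a
    using prod.remove[OF assms, of "\<lambda>l. dd_weight \<alpha> x l ((g(i := a)) l)"]
    by (simp add: mult.commute prod.cong[OF refl, of "I - {i}" "\<lambda>l. dd_weight \<alpha> x l ((g(i := a)) l)"])
  have "sds_dd scale I \<alpha> f x = (\<Sum>a\<le>\<alpha> i. \<Sum>g\<in>?P. scale (\<Prod>l\<in>I. dd_weight \<alpha> x l ((g(i := a)) l))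
          (f (\<lambda>l\<in>I. x (l, (g(i := a)) l))))"
    unfolding sds_dd_eq_dd_weight PiE_I sum.reindex[OF inj] sum.cartesian_product
    by (simp add: case_prod_unfold)
  also have "\<dots> = (\<Sum>g\<in>?P. \<Sum>a\<le>\<alpha> i. scale (\<Prod>l\<in>I. dd_weight \<alpha> x l ((g(i := a)) l))
          (f (\<lambda>l\<in>I. x (l, (g(i := a)) l))))"
    by (rule sum.swap)
  also have "\<dots> = (\<Sum>g\<in>?P. scale (\<Prod>l\<in>I - {i}. dd_weight \<alpha> x l (g l))
          (\<Sum>a\<le>\<alpha> i. scale (dd_weight \<alpha> x i a) (f (\<lambda>l\<in>I. x (l, (g(i := a)) l)))))"
    by (simp only: weight scale_scale[symmetric] scale_sum_right)
  finally show ?thesis .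
qed

lemma (in vector_space) sds_dd_unitmi:
  assumes "finite I" "i \<in> I"
  shows "sds_dd scale I (unitmi i) f z =
     scale (inverse (z (i, 0) - z (i, 1))) (f (\<lambda>l\<in>I. z (l, 0)))
   + scale (inverse (z (i, 1) - z (i, 0))) (f (\<lambda>l\<in>I. z (l, unitmi i l)))"
proof -
  have "PiE (I - {i}) (\<lambda>l. {..unitmi i l}) = {\<lambda>l\<in>I - {i}. 0}"
    by (subst PiE_eq_singleton) (auto simp: unitmi_def)
  moreover have "(\<lambda>l\<in>I. z (l, ((\<lambda>l\<in>I - {i}. 0)(i := a)) l)) = (\<lambda>l\<in>I. z (l, a * unitmi i l))" for a
    by (auto simp: fun_eq_iff unitmi_def)
  moreover have "{..Suc 0} - {0} = {Suc 0}" "{..Suc 0} - {Suc 0} = {0}" by auto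
  ultimately show ?thesis
    using sds_dd_split_coordinate[OF assms, of "unitmi i" f z] assms(2)
    by (simp add: dd_weight_def unitmi_def)
qed

section \<open>Splitting a block of variables\<close>

text \<open>
  The variables of f^{<e_i>} are indexed by pairs (l, c) with c \<le> (e_i)_l. The i-th block of
  x \<in> U^{<\<alpha>>} is split into the block (i, 0), which receives x^{(i)}_0 and has order 0, and the
  block (i, 1), which receives x^{(i)}_1, ..., x^{(i)}_{\<alpha>_i} and has order \<alpha>_i - 1.
\<close>

definition split_mi :: "'i \<Rightarrow> ('i \<Rightarrow> nat) \<Rightarrow> 'i \<times> nat \<Rightarrow> nat" where
  "split_mi i \<alpha> p = (if fst p = i then (if snd p = 0 then 0 else \<alpha> i - 1) else \<alpha> (fst p))"

definition split_pt :: "'i set \<Rightarrow> 'i \<Rightarrow> ('i \<Rightarrow> nat) \<Rightarrow> ('i \<times> nat \<Rightarrow> 'k) \<Rightarrow> ('i \<times> nat) \<times> nat \<Rightarrow> 'k" where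
  "split_pt I i \<alpha> x = (\<lambda>q\<in>(SIGMA p:(SIGMA l:I. {..unitmi i l}). {..split_mi i \<alpha> p}).
      x (fst (fst q), snd (fst q) + snd q))"

text \<open>
  The index of the sum defining (f^{>e_i<})^{>\<beta><} that corresponds to g \<in> \<Prod>_{l \<noteq> i} {..\<alpha>_l}
  and b < \<alpha>_i. On the block i only c \<in> {0, 1} occurs, so c * b is 0 at (i, 0) and b at (i, 1).
\<close>

definition split_idx :: "'i set \<Rightarrow> 'i \<Rightarrow> ('i \<Rightarrow> nat) \<Rightarrow> nat \<Rightarrow> 'i \<times> nat \<Rightarrow> nat" where
  "split_idx I i g b = (\<lambda>p\<in>(SIGMA l:I. {..unitmi i l}). if fst p = i then snd p * b else g (fst p))"

lemma split_mi_bound: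
  assumes "1 \<le> \<alpha> i" "c \<le> unitmi i l" "m \<le> split_mi i \<alpha> (l, c)"
  shows "c + m \<le> \<alpha> l"
  using assms by (cases "l = i") (auto simp: split_mi_def unitmi_def split: if_splits)

lemma split_pt_apply:
  assumes "l \<in> I" "c \<le> unitmi i l" "m \<le> split_mi i \<alpha> (l, c)"
  shows "split_pt I i \<alpha> x ((l, c), m) = x (l, c + m)"
  using assms unfolding split_pt_def by simp

lemma sum_split_mi:
  assumes "finite I" "i \<in> I" "1 \<le> \<alpha> i"
  shows "sum (split_mi i \<alpha>) (SIGMA l:I. {..unitmi i l}) = sum \<alpha> I - 1"
proof -
  have "sum (split_mi i \<alpha>) (SIGMA l:I. {..unitmi i l}) = (\<Sum>l\<in>I. \<Sum>c\<le>unitmi i l. split_mi i \<alpha> (l, c))"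
    using assms by (simp add: sum.Sigma)
  also have "\<dots> = (\<Sum>c\<le>unitmi i i. split_mi i \<alpha> (i, c)) + (\<Sum>l\<in>I - {i}. \<Sum>c\<le>unitmi i l. split_mi i \<alpha> (l, c))"
    by (rule sum.remove[OF assms(1,2)])
  also have "\<dots> = (\<alpha> i - 1) + (\<Sum>l\<in>I - {i}. \<alpha> l)"
    by (auto simp: unitmi_def split_mi_def intro!: sum.cong)
  also have "\<dots> = sum \<alpha> I - 1"
    using sum.remove[OF assms(1,2), of \<alpha>] assms(3) by simp
  finally show ?thesis .
qed

lemma split_idx_in_PiE:
  assumes "\<alpha> i = Suc n" "g \<in> PiE (I - {i}) (\<lambda>l. {..\<alpha> l})" "b \<le> n"
  shows "split_idx I i g b \<in> PiE (SIGMA l:I. {..unitmi i l}) (\<lambda>p. {..split_mi i \<alpha> p})"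
proof (rule PiE_I)
  fix p assume p_in: "p \<in> (SIGMA l:I. {..unitmi i l})"
  then obtain l c where p: "p = (l, c)" and l: "l \<in> I" and c: "c \<le> unitmi i l" by auto
  show "split_idx I i g b p \<in> {..split_mi i \<alpha> p}"
  proof (cases "l = i")
    case True
    then have "c = 0 \<or> c = 1" using c by (auto simp: unitmi_def)
    then show ?thesis using p_in assms(1,3) unfolding p True by (auto simp: split_idx_def split_mi_def)
  next
    case False
    then show ?thesis using p_in c PiE_mem[OF assms(2), of l] l unfolding p
      by (simp add: split_idx_def split_mi_def unitmi_def)
  qed
qed (simp add: split_idx_def)

lemma split_idx_restrict:
  assumes "i \<in> I" "j \<in> PiE (SIGMA l:I. {..unitmi i l}) (\<lambda>p. {..split_mi i \<alpha> p})"
  shows "split_idx I i (\<lambda>l\<in>I - {i}. j (l, 0)) (j (i, 1)) = j"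
proof
  have j_i0: "j (i, 0) = 0"
    using PiE_mem[OF assms(2), of "(i, 0)"] assms(1) by (simp add: split_mi_def)
  fix p
  show "split_idx I i (\<lambda>l\<in>I - {i}. j (l, 0)) (j (i, 1)) p = j p"
  proof (cases "p \<in> (SIGMA l:I. {..unitmi i l})")
    case True
    then obtain l c where p: "p = (l, c)" and l: "l \<in> I" and c: "c \<le> unitmi i l" by auto
    show ?thesis
    proof (cases "l = i")
      case True
      then have "c = 0 \<or> c = 1" using c by (auto simp: unitmi_def)
      then show ?thesis using \<open>p \<in> (SIGMA l:I. {..unitmi i l})\<close> j_i0 unfolding p True
        by (auto simp: split_idx_def)
    next
      case False
      then show ?thesis using \<open>p \<in> (SIGMA l:I. {..unitmi i l})\<close> l c unfolding p
        by (simp add: split_idx_def unitmi_def)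
    qed
  next
    case False
    then show ?thesis using PiE_arb[OF assms(2) False] by (simp add: split_idx_def)
  qed
qed

lemma split_idx_components:
  assumes "i \<in> I" "g \<in> PiE (I - {i}) (\<lambda>l. {..\<alpha> l})"
  shows "(\<lambda>l\<in>I - {i}. split_idx I i g b (l, 0)) = g" "split_idx I i g b (i, 1) = b"
  using assms PiE_arb[OF assms(2)] by (auto simp: split_idx_def unitmi_def fun_eq_iff)

lemma sum_PiE_split_mi:
  assumes "i \<in> I" "\<alpha> i = Suc n"
  shows "(\<Sum>j\<in>PiE (SIGMA l:I. {..unitmi i l}) (\<lambda>p. {..split_mi i \<alpha> p}). F j)
       = (\<Sum>g\<in>PiE (I - {i}) (\<lambda>l. {..\<alpha> l}). \<Sum>b\<le>n. F (split_idx I i g b))"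
proof -
  let ?I' = "SIGMA l:I. {..unitmi i l}"
  have "(\<Sum>j\<in>PiE ?I' (\<lambda>p. {..split_mi i \<alpha> p}). F j)
      = (\<Sum>(g, b)\<in>PiE (I - {i}) (\<lambda>l. {..\<alpha> l}) \<times> {..n}. F (split_idx I i g b))"
  proof (rule sum.reindex_bij_witness[of _ "\<lambda>(g, b). split_idx I i g b" "\<lambda>j. (\<lambda>l\<in>I - {i}. j (l, 0), j (i, 1))"])
    fix j assume j: "j \<in> PiE ?I' (\<lambda>p. {..split_mi i \<alpha> p})"
    have "j (l, 0) \<le> \<alpha> l" if "l \<in> I - {i}" for l
      using PiE_mem[OF j, of "(l, 0)"] that by (simp add: split_mi_def unitmi_def)
    moreover have "j (i, 1) \<le> n"
      using PiE_mem[OF j, of "(i, 1)"] assms by (simp add: split_mi_def unitmi_def)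
    ultimately show "(\<lambda>l\<in>I - {i}. j (l, 0), j (i, 1)) \<in> PiE (I - {i}) (\<lambda>l. {..\<alpha> l}) \<times> {..n}"
      by auto
    show "(case (\<lambda>l\<in>I - {i}. j (l, 0), j (i, 1)) of (g, b) \<Rightarrow> split_idx I i g b) = j"
      "(case (\<lambda>l\<in>I - {i}. j (l, 0), j (i, 1)) of (g, b) \<Rightarrow> F (split_idx I i g b)) = F j"
      using split_idx_restrict[OF assms(1) j] by simp_all
  next
    fix gb assume "gb \<in> PiE (I - {i}) (\<lambda>l. {..\<alpha> l}) \<times> {..n}"
    then obtain g b where gb: "gb = (g, b)" and g: "g \<in> PiE (I - {i}) (\<lambda>l. {..\<alpha> l})" and b: "b \<le> n"
      by auto
    show "(case gb of (g, b) \<Rightarrow> split_idx I i g b) \<in> PiE ?I' (\<lambda>p. {..split_mi i \<alpha> p})"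
      unfolding gb using split_idx_in_PiE[OF assms(2) g b] by simp
    show "(\<lambda>l\<in>I - {i}. (case gb of (g, b) \<Rightarrow> split_idx I i g b) (l, 0),
           (case gb of (g, b) \<Rightarrow> split_idx I i g b) (i, 1)) = gb"
      unfolding gb using split_idx_components[OF assms(1) g] by simp
  qed
  then show ?thesis by (simp only: sum.cartesian_product)
qed

lemma split_pt_split_idx:
  assumes "\<alpha> i = Suc n" "g \<in> PiE (I - {i}) (\<lambda>l. {..\<alpha> l})" "b \<le> n" "l \<in> I" "c \<le> unitmi i l"
  shows "split_pt I i \<alpha> x ((l, c), split_idx I i g b (l, c)) = x (l, (g(i := c * Suc b)) l)"
proof -
  have "split_idx I i g b (l, c) \<le> split_mi i \<alpha> (l, c)"
    using PiE_mem[OF split_idx_in_PiE[OF assms(1-3)], of "(l, c)"] assms(4,5) by simp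
  then have "split_pt I i \<alpha> x ((l, c), split_idx I i g b (l, c)) = x (l, c + split_idx I i g b (l, c))"
    by (rule split_pt_apply[OF assms(4,5)])
  also have "\<dots> = x (l, (g(i := c * Suc b)) l)"
    using assms(4,5) by (cases "l = i") (auto simp: split_idx_def unitmi_def le_Suc_eq)
  finally show ?thesis .
qed

lemma split_pt_weights:
  assumes "finite I" "i \<in> I" "\<alpha> i = Suc n" "g \<in> PiE (I - {i}) (\<lambda>l. {..\<alpha> l})" "b \<le> n"
  shows "(\<Prod>p\<in>(SIGMA l:I. {..unitmi i l}). dd_weight (split_mi i \<alpha>) (split_pt I i \<alpha> x) p (split_idx I i g b p))
       = (\<Prod>l\<in>I - {i}. dd_weight \<alpha> x l (g l)) * (\<Prod>m\<in>{..n} - {b}. inverse (x (i, Suc b) - x (i, Suc m)))"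
proof -
  define F where "F p = dd_weight (split_mi i \<alpha>) (split_pt I i \<alpha> x) p (split_idx I i g b p)" for p
  have "(\<Prod>p\<in>(SIGMA l:I. {..unitmi i l}). F p) = (\<Prod>l\<in>I. \<Prod>c\<le>unitmi i l. F (l, c))"
    using assms(1) by (simp add: prod.Sigma)
  also have "\<dots> = (\<Prod>c\<le>unitmi i i. F (i, c)) * (\<Prod>l\<in>I - {i}. \<Prod>c\<le>unitmi i l. F (l, c))"
    by (rule prod.remove[OF assms(1,2)])
  also have "(\<Prod>l\<in>I - {i}. \<Prod>c\<le>unitmi i l. F (l, c)) = (\<Prod>l\<in>I - {i}. F (l, 0))"
    by (rule prod.cong) (auto simp: unitmi_def)
  also have "(\<Prod>c\<le>unitmi i i. F (i, c)) = F (i, 1)"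
    using assms(2) by (simp add: F_def dd_weight_def split_mi_def split_idx_def unitmi_def)
  also have "F (i, 1) = (\<Prod>m\<in>{..n} - {b}. inverse (x (i, Suc b) - x (i, Suc m)))"
    using assms(2,3,5) unfolding F_def dd_weight_def
    by (intro prod.cong) (auto simp: split_mi_def split_idx_def split_pt_apply unitmi_def)
  also have "(\<Prod>l\<in>I - {i}. F (l, 0)) = (\<Prod>l\<in>I - {i}. dd_weight \<alpha> x l (g l))"
    using PiE_mem[OF assms(4)] unfolding F_def dd_weight_def
    by (intro prod.cong refl) (auto simp: split_mi_def split_idx_def split_pt_apply unitmi_def)
  finally show ?thesis unfolding F_def by (simp add: mult.commute)
qed

lemma (in vector_space) sds_dd_split_pt:
  assumes "finite I" "i \<in> I" "1 \<le> \<alpha> i" "inj_on (\<lambda>m. x (i, m)) {..\<alpha> i}"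
  shows "sds_dd scale (SIGMA l:I. {..unitmi i l}) (split_mi i \<alpha>) (sds_dd scale I (unitmi i) f) (split_pt I i \<alpha> x)
       = sds_dd scale I \<alpha> f x"
proof -
  obtain n where n: "\<alpha> i = Suc n" using assms(3) not0_implies_Suc by force
  let ?I' = "SIGMA l:I. {..unitmi i l}" and ?P = "PiE (I - {i}) (\<lambda>l. {..\<alpha> l})"
  define pt where "pt g a = (\<lambda>l\<in>I. x (l, (g(i := a)) l))" for g a
  define W where "W g = (\<Prod>l\<in>I - {i}. dd_weight \<alpha> x l (g l))" for g
  define w where "w b = (\<Prod>m\<in>{..n} - {b}. inverse (x (i, Suc b) - x (i, Suc m)))" for b
  define dd1 where "dd1 g b = scale (inverse (x (i, 0) - x (i, Suc b))) (f (pt g 0))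
      + scale (inverse (x (i, Suc b) - x (i, 0))) (f (pt g (Suc b)))" for g b
  have unit_dd: "sds_dd scale I (unitmi i) f (\<lambda>p\<in>?I'. split_pt I i \<alpha> x (p, split_idx I i g b p)) = dd1 g b"
    if g: "g \<in> ?P" and b: "b \<le> n" for g b
  proof -
    define z where "z = (\<lambda>p\<in>?I'. split_pt I i \<alpha> x (p, split_idx I i g b p))"
    have z: "z (l, c) = x (l, (g(i := c * Suc b)) l)" if "l \<in> I" "c \<le> unitmi i l" for l c
      using split_pt_split_idx[where x = x, OF n g b that] that unfolding z_def by simp
    have "(\<lambda>l\<in>I. z (l, 0)) = pt g 0" "(\<lambda>l\<in>I. z (l, unitmi i l)) = pt g (Suc b)"
      using z unfolding pt_def by (auto simp: fun_eq_iff unitmi_def)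
    moreover have "z (i, 0) = x (i, 0)" "z (i, 1) = x (i, Suc b)"
      using z[of i 0] z[of i 1] assms(2) by (simp_all add: unitmi_def)
    ultimately show ?thesis
      unfolding z_def[symmetric] sds_dd_unitmi[OF assms(1,2)] dd1_def by simp
  qed
  have recursion: "(\<Sum>b\<le>n. scale (w b) (dd1 g b)) = (\<Sum>a\<le>\<alpha> i. scale (dd_weight \<alpha> x i a) (f (pt g a)))" for g
    using divided_difference_recursion[of "\<lambda>m. x (i, m)" n "\<lambda>a. f (pt g a)"] assms(4)
    unfolding n w_def dd1_def dd_weight_def by simp
  have "sds_dd scale ?I' (split_mi i \<alpha>) (sds_dd scale I (unitmi i) f) (split_pt I i \<alpha> x)
      = (\<Sum>g\<in>?P. \<Sum>b\<le>n. scale (\<Prod>p\<in>?I'. dd_weight (split_mi i \<alpha>) (split_pt I i \<alpha> x) p (split_idx I i g b p))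
          (sds_dd scale I (unitmi i) f (\<lambda>p\<in>?I'. split_pt I i \<alpha> x (p, split_idx I i g b p))))"
    unfolding sds_dd_eq_dd_weight by (rule sum_PiE_split_mi[where \<alpha> = \<alpha>, OF assms(2) n])
  also have "\<dots> = (\<Sum>g\<in>?P. \<Sum>b\<le>n. scale (W g) (scale (w b) (dd1 g b)))"
    by (simp add: split_pt_weights[where \<alpha> = \<alpha>, OF assms(1,2) n] unit_dd W_def w_def)
  also have "\<dots> = (\<Sum>g\<in>?P. scale (W g) (\<Sum>a\<le>\<alpha> i. scale (dd_weight \<alpha> x i a) (f (pt g a))))"
    by (simp only: scale_sum_right[symmetric] recursion)
  also have "\<dots> = sds_dd scale I \<alpha> f x"
    unfolding W_def pt_def by (rule sds_dd_split_coordinate[OF assms(1,2), symmetric])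
  finally show ?thesis .
qed

section \<open>Continuous extensions of divided differences\<close>

definition is_dd_extension :: "('k::{field,topological_space} \<Rightarrow> 'f \<Rightarrow> 'f::{ab_group_add,topological_space})
    \<Rightarrow> 'a set \<Rightarrow> ('a \<Rightarrow> 'k) set \<Rightarrow> (('a \<Rightarrow> 'k) \<Rightarrow> 'f) \<Rightarrow> ('a \<Rightarrow> nat) \<Rightarrow> (('a \<times> nat \<Rightarrow> 'k) \<Rightarrow> 'f) \<Rightarrow> bool" where
  "is_dd_extension smul I U f \<alpha> g \<longleftrightarrow>
     continuous_map (subtopology (prodtop (SIGMA i:I. {..\<alpha> i})) (sds_lt I \<alpha> U)) euclidean g
     \<and> (\<forall>x\<in>sds_gt I \<alpha> U. g x = sds_dd smul I \<alpha> f x)"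

lemma sds_C_Suc_iff:
  "sds_C smul I U f (Suc k) \<longleftrightarrow>
     sds_C smul I U f k \<and> (\<forall>\<alpha>. sum \<alpha> I = Suc k \<longrightarrow> (\<exists>g. is_dd_extension smul I U f \<alpha> g))"
  unfolding is_dd_extension_def by simp

lemma sds_ext_eq_Eps: "sds_ext smul I U f \<alpha> = (SOME g. is_dd_extension smul I U f \<alpha> g)"
  unfolding sds_ext_def is_dd_extension_def ..

lemma is_dd_extension_sds_ext:
  assumes "\<exists>g. is_dd_extension smul I U f \<alpha> g"
  shows "is_dd_extension smul I U f \<alpha> (sds_ext smul I U f \<alpha>)"
  unfolding sds_ext_eq_Eps using assms by (rule someI_ex)

lemma sds_C_le: "sds_C smul I U f k \<Longrightarrow> j \<le> k \<Longrightarrow> sds_C smul I U f j"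
  by (induction k) (auto simp: le_Suc_eq)

lemma is_dd_extension_sds_ext_le:
  assumes "sds_C smul I U f k" "1 \<le> sum \<alpha> I" "sum \<alpha> I \<le> k"
  shows "is_dd_extension smul I U f \<alpha> (sds_ext smul I U f \<alpha>)"
proof -
  obtain m where m: "sum \<alpha> I = Suc m" using assms(2) not0_implies_Suc by force
  then have "sds_C smul I U f (Suc m)"
    using sds_C_le[OF assms(1), of "Suc m"] assms(3) by (simp del: sds_C.simps)
  then have "\<exists>g. is_dd_extension smul I U f \<alpha> g" using m unfolding sds_C_Suc_iff by blast
  then show ?thesis by (rule is_dd_extension_sds_ext)
qed

lemma continuous_map_prodtop_reindex:
  assumes "\<And>q. q \<in> J' \<Longrightarrow> \<tau> q \<in> J"
  shows "continuous_map (prodtop J) (prodtop J') (\<lambda>x. \<lambda>q\<in>J'. x (\<tau> q))"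
  unfolding prodtop_def
proof (subst continuous_map_componentwise, intro conjI ballI)
  fix q assume "q \<in> J'"
  then show "continuous_map (product_topology (\<lambda>_. euclidean) J) euclidean (\<lambda>x. (\<lambda>q\<in>J'. x (\<tau> q)) q)"
    using continuous_map_product_projection[OF assms] by simp
qed auto

lemma continuous_map_split_pt:
  assumes "1 \<le> \<alpha> i"
  shows "continuous_map (prodtop (SIGMA l:I. {..\<alpha> l}))
           (prodtop (SIGMA p:(SIGMA l:I. {..unitmi i l}). {..split_mi i \<alpha> p})) (split_pt I i \<alpha>)"
  unfolding split_pt_def[abs_def] using split_mi_bound[where \<alpha> = \<alpha>, OF assms]
  by (intro continuous_map_prodtop_reindex) auto

lemma split_pt_in_sds_lt:
  assumes "1 \<le> \<alpha> i" "x \<in> sds_lt I \<alpha> U"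
  shows "split_pt I i \<alpha> x \<in> sds_lt (SIGMA l:I. {..unitmi i l}) (split_mi i \<alpha>) (sds_lt I (unitmi i) U)"
proof -
  let ?I' = "SIGMA l:I. {..unitmi i l}"
  have xU: "\<And>j. j \<in> PiE I (\<lambda>i. {..\<alpha> i}) \<Longrightarrow> (\<lambda>i\<in>I. x (i, j i)) \<in> U"
    using assms(2) unfolding sds_lt_def by auto
  have "(\<lambda>p\<in>?I'. split_pt I i \<alpha> x (p, j p)) \<in> sds_lt I (unitmi i) U"
    if j: "j \<in> PiE ?I' (\<lambda>p. {..split_mi i \<alpha> p})" for j
  proof (unfold sds_lt_def, intro CollectI conjI ballI)
    fix c assume c: "c \<in> PiE I (\<lambda>l. {..unitmi i l})"
    have c_le: "c l \<le> unitmi i l" if "l \<in> I" for l using PiE_mem[OF c that] by simp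
    have j_le: "j (l, c l) \<le> split_mi i \<alpha> (l, c l)" if "l \<in> I" for l
      using PiE_mem[OF j, of "(l, c l)"] that c_le[OF that] by simp
    have "(\<lambda>l\<in>I. c l + j (l, c l)) \<in> PiE I (\<lambda>i. {..\<alpha> i})"
      using split_mi_bound[where \<alpha> = \<alpha>, OF assms(1) c_le j_le] by auto
    moreover have "(\<lambda>l\<in>I. (\<lambda>p\<in>?I'. split_pt I i \<alpha> x (p, j p)) (l, c l)) = (\<lambda>l\<in>I. x (l, c l + j (l, c l)))"
      using c_le j_le by (auto simp: split_pt_apply)
    ultimately show "(\<lambda>l\<in>I. (\<lambda>p\<in>?I'. split_pt I i \<alpha> x (p, j p)) (l, c l)) \<in> U"
      using xU[of "\<lambda>l\<in>I. c l + j (l, c l)"] by (simp cong: restrict_cong)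
  qed auto
  moreover have "split_pt I i \<alpha> x \<in> PiE (SIGMA p:?I'. {..split_mi i \<alpha> p}) (\<lambda>_. UNIV)"
    unfolding split_pt_def by auto
  ultimately show ?thesis unfolding sds_lt_def[of ?I'] by blast
qed

lemma split_pt_in_sds_gt:
  assumes "1 \<le> \<alpha> i" "x \<in> sds_gt I \<alpha> U"
  shows "split_pt I i \<alpha> x \<in> sds_gt (SIGMA l:I. {..unitmi i l}) (split_mi i \<alpha>) (sds_lt I (unitmi i) U)"
proof -
  have x_inj: "\<And>l j m. l \<in> I \<Longrightarrow> j \<le> \<alpha> l \<Longrightarrow> m \<le> \<alpha> l \<Longrightarrow> j \<noteq> m \<Longrightarrow> x (l, j) \<noteq> x (l, m)"
    using assms(2) unfolding sds_gt_def by auto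
  have "split_pt I i \<alpha> x ((l, c), j) \<noteq> split_pt I i \<alpha> x ((l, c), m)"
    if "l \<in> I" "c \<le> unitmi i l" "j \<le> split_mi i \<alpha> (l, c)" "m \<le> split_mi i \<alpha> (l, c)" "j \<noteq> m" for l c j m
    using that x_inj[OF that(1) split_mi_bound[where \<alpha> = \<alpha>, OF assms(1) that(2,3)]
        split_mi_bound[where \<alpha> = \<alpha>, OF assms(1) that(2,4)]]
    by (simp add: split_pt_apply)
  then show ?thesis
    using split_pt_in_sds_lt[where \<alpha> = \<alpha>, OF assms(1)] assms(2) unfolding sds_gt_def by auto
qed

lemma (in vector_space) sds_dd_split_pt_ext:
  assumes "finite I" "i \<in> I" "1 \<le> \<alpha> i" "x \<in> sds_gt I \<alpha> U"
    and g: "\<forall>z\<in>sds_gt I (unitmi i) U. g z = sds_dd scale I (unitmi i) f z"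
  shows "sds_dd scale (SIGMA l:I. {..unitmi i l}) (split_mi i \<alpha>) g (split_pt I i \<alpha> x) = sds_dd scale I \<alpha> f x"
proof -
  let ?I' = "SIGMA l:I. {..unitmi i l}" and ?y = "split_pt I i \<alpha> x"
  have x_inj: "\<And>l j m. l \<in> I \<Longrightarrow> j \<le> \<alpha> l \<Longrightarrow> m \<le> \<alpha> l \<Longrightarrow> j \<noteq> m \<Longrightarrow> x (l, j) \<noteq> x (l, m)"
    using assms(4) unfolding sds_gt_def by auto
  have "(\<lambda>p\<in>?I'. ?y (p, j p)) \<in> sds_gt I (unitmi i) U" if j: "j \<in> PiE ?I' (\<lambda>p. {..split_mi i \<alpha> p})" for j
  proof -
    have "(\<lambda>p\<in>?I'. ?y (p, j p)) \<in> sds_lt I (unitmi i) U"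
      using split_pt_in_sds_gt[where \<alpha> = \<alpha>, OF assms(3,4)] j unfolding sds_gt_def sds_lt_def[of ?I'] by blast
    moreover have "j (i, 0) = 0" using PiE_mem[OF j, of "(i, 0)"] assms(2) by (simp add: split_mi_def)
    then have "?y ((i, 0), j (i, 0)) \<noteq> ?y ((i, 1), j (i, 1))"
      using PiE_mem[OF j, of "(i, 1)"] assms(2,3) x_inj[OF assms(2), of 0 "Suc (j (i, 1))"]
      by (simp add: split_pt_apply split_mi_def unitmi_def)
    ultimately show ?thesis using assms(2) unfolding sds_gt_def by (auto simp: unitmi_def le_Suc_eq)
  qed
  then have "sds_dd scale ?I' (split_mi i \<alpha>) g ?y = sds_dd scale ?I' (split_mi i \<alpha>) (sds_dd scale I (unitmi i) f) ?y"
    using g unfolding sds_dd_def by (intro sum.cong refl) simp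
  also have "\<dots> = sds_dd scale I \<alpha> f x"
    using x_inj[OF assms(2)] by (intro sds_dd_split_pt[where \<alpha> = \<alpha>, OF assms(1-3)]) (auto simp: inj_on_def)
  finally show ?thesis .
qed

lemma is_dd_extension_split_pt:
  assumes "vector_space smul" "finite I" "i \<in> I" "1 \<le> \<alpha> i" "sds_C smul I U f 1"
    and "is_dd_extension smul (SIGMA l:I. {..unitmi i l}) (sds_lt I (unitmi i) U) (sds_ext smul I U f (unitmi i))
           (split_mi i \<alpha>) G"
  shows "is_dd_extension smul I U f \<alpha> (G \<circ> split_pt I i \<alpha>)"
  unfolding is_dd_extension_def
proof
  have "continuous_map (subtopology (prodtop (SIGMA l:I. {..\<alpha> l})) (sds_lt I \<alpha> U))
     (subtopology (prodtop (SIGMA p:(SIGMA l:I. {..unitmi i l}). {..split_mi i \<alpha> p}))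
        (sds_lt (SIGMA l:I. {..unitmi i l}) (split_mi i \<alpha>) (sds_lt I (unitmi i) U))) (split_pt I i \<alpha>)"
    by (rule continuous_map_into_subtopology[OF continuous_map_from_subtopology[OF
          continuous_map_split_pt[where \<alpha> = \<alpha>, OF assms(4)]]])
      (auto intro: split_pt_in_sds_lt[where \<alpha> = \<alpha>, OF assms(4)])
  then show "continuous_map (subtopology (prodtop (SIGMA l:I. {..\<alpha> l})) (sds_lt I \<alpha> U)) euclidean (G \<circ> split_pt I i \<alpha>)"
    using assms(6) unfolding is_dd_extension_def by (auto intro: continuous_map_compose)
  have "sum (unitmi i) I = 1" using assms(2,3) by (simp add: unitmi_def)
  then have "is_dd_extension smul I U f (unitmi i) (sds_ext smul I U f (unitmi i))"
    using assms(5) by (intro is_dd_extension_sds_ext_le) auto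
  then have unit_ext: "\<forall>z\<in>sds_gt I (unitmi i) U. sds_ext smul I U f (unitmi i) z = sds_dd smul I (unitmi i) f z"
    unfolding is_dd_extension_def by blast
  show "\<forall>x\<in>sds_gt I \<alpha> U. (G \<circ> split_pt I i \<alpha>) x = sds_dd smul I \<alpha> f x"
  proof
    fix x assume x: "x \<in> sds_gt I \<alpha> U"
    have "G (split_pt I i \<alpha> x)
        = sds_dd smul (SIGMA l:I. {..unitmi i l}) (split_mi i \<alpha>) (sds_ext smul I U f (unitmi i)) (split_pt I i \<alpha> x)"
      using assms(6) split_pt_in_sds_gt[OF assms(4) x] unfolding is_dd_extension_def by blast
    also have "\<dots> = sds_dd smul I \<alpha> f x"
      by (rule vector_space.sds_dd_split_pt_ext[OF assms(1-4) x unit_ext])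
    finally show "(G \<circ> split_pt I i \<alpha>) x = sds_dd smul I \<alpha> f x" by simp
  qed
qed

lemma sum_pos_imp_ex_pos:
  fixes \<alpha> :: "'a \<Rightarrow> nat"
  assumes "0 < sum \<alpha> I"
  obtains i where "i \<in> I" "1 \<le> \<alpha> i"
proof -
  have "\<exists>i\<in>I. 1 \<le> \<alpha> i"
  proof (rule ccontr)
    assume "\<not> (\<exists>i\<in>I. 1 \<le> \<alpha> i)"
    then have "\<forall>i\<in>I. \<alpha> i = 0" by auto
    then show False using assms by simp
  qed
  then show ?thesis using that by blast
qed

lemma sds_C_Suc_from_sds_ext_unitmi:
  assumes "vector_space smul" "finite I" "sds_C smul I U f 1"
    and "\<forall>i\<in>I. sds_C smul (SIGMA l:I. {..unitmi i l}) (sds_lt I (unitmi i) U) (sds_ext smul I U f (unitmi i)) k"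
  shows "sds_C smul I U f (Suc k)"
  using assms(4)
proof (induction k)
  case 0
  then show ?case using assms(3) by simp
next
  case (Suc k)
  have "\<exists>G. is_dd_extension smul I U f \<alpha> G" if \<alpha>: "sum \<alpha> I = Suc (Suc k)" for \<alpha>
  proof -
    have "0 < sum \<alpha> I" using \<alpha> by simp
    then obtain i where i: "i \<in> I" "1 \<le> \<alpha> i" by (rule sum_pos_imp_ex_pos)
    have "sum (split_mi i \<alpha>) (SIGMA l:I. {..unitmi i l}) = Suc k"
      using sum_split_mi[where \<alpha> = \<alpha>, OF assms(2) i] \<alpha> by simp
    then obtain G where "is_dd_extension smul (SIGMA l:I. {..unitmi i l}) (sds_lt I (unitmi i) U)
        (sds_ext smul I U f (unitmi i)) (split_mi i \<alpha>) G"
      using Suc.prems i(1) unfolding sds_C_Suc_iff by blast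
    then show ?thesis using is_dd_extension_split_pt[where \<alpha> = \<alpha>, OF assms(1-2) i assms(3)] by blast
  qed
  then show ?case using Suc by (simp add: sds_C_Suc_iff del: sds_C.simps)
qed

section \<open>Density of U^{>\<alpha><} in U^{<\<alpha>>}\<close>

lemma topological_field_infinite_open:
  assumes tf: "topological_field TYPE('k::{field,t2_space})" and V: "open (V::'k set)" "V \<noteq> {}"
  shows "infinite V"
proof
  assume "finite V"
  obtain v where v: "v \<in> V" using V by auto
  have "open (V - (V - {v}))" using V \<open>finite V\<close> by (intro open_Diff finite_imp_closed) auto
  moreover have "V - (V - {v}) = {v}" using v by auto
  ultimately have open_v: "open {v}" by simp
  have add: "continuous_on UNIV (\<lambda>p::'k \<times> 'k. fst p + snd p)" using tf unfolding topological_field_def by simp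
  have "open {s}" for s :: 'k
  proof -
    have "continuous_on UNIV (\<lambda>t::'k. t + (v - s))"
      using continuous_on_compose2[OF add continuous_on_Pair[OF continuous_on_id continuous_on_const]] by simp
    moreover have "(\<lambda>t. t + (v - s)) -` {v} = {s}" by auto
    ultimately show ?thesis using open_vimage[OF open_v] by metis
  qed
  then have "open S" for S :: "'k set"
    by (metis open_UN UN_singleton)
  then show False using tf unfolding topological_field_def by blast
qed

lemma inj_on_in_PiE:
  assumes "finite J" "\<forall>p\<in>J. infinite (V p)"
  shows "\<exists>y\<in>PiE J V. inj_on y J"
  using assms
proof (induction J rule: finite_induct)
  case empty
  then show ?case by auto
next
  case (insert p J)
  then obtain y where y: "y \<in> PiE J V" and inj: "inj_on y J" by auto
  have "infinite (V p - y ` J)" using insert by (intro Diff_infinite_finite) auto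
  then obtain v where v: "v \<in> V p" "v \<notin> y ` J" by (metis Diff_iff ex_in_conv finite.emptyI)
  have "y(p := v) \<in> PiE (insert p J) V" using y v(1) by (rule PiE_fun_upd[rotated])
  moreover have "inj_on (y(p := v)) (insert p J)" using inj v(2) insert.hyps(2) by (auto simp: inj_on_def)
  ultimately show ?case by blast
qed

lemma Hausdorff_space_euclidean_t2: "Hausdorff_space (euclidean :: 'a::t2_space topology)"
  unfolding Hausdorff_space_def disjnt_def by (metis hausdorff open_openin)

lemma topspace_prodtop [simp]: "topspace (prodtop J) = PiE J (\<lambda>_. UNIV)"
  unfolding prodtop_def by simp

lemma openin_sds_lt:
  fixes U :: "('i \<Rightarrow> 'k::topological_space) set"
  assumes "finite I" "openin (prodtop I) U"
  shows "openin (prodtop (SIGMA i:I. {..\<alpha> i})) (sds_lt I \<alpha> U)"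
proof -
  let ?X = "prodtop (SIGMA i:I. {..\<alpha> i}) :: ('i \<times> nat \<Rightarrow> 'k) topology"
  have "sds_lt I \<alpha> U = (\<Inter>j\<in>PiE I (\<lambda>i. {..\<alpha> i}). {x \<in> topspace ?X. (\<lambda>i\<in>I. x (i, j i)) \<in> U}) \<inter> topspace ?X"
    unfolding sds_lt_def by auto
  moreover have "openin ?X ((\<Inter>j\<in>PiE I (\<lambda>i. {..\<alpha> i}). {x \<in> topspace ?X. (\<lambda>i\<in>I. x (i, j i)) \<in> U}) \<inter> topspace ?X)"
  proof (rule openin_INT)
    fix j assume "j \<in> PiE I (\<lambda>i. {..\<alpha> i})"
    then show "openin ?X {x \<in> topspace ?X. (\<lambda>i\<in>I. x (i, j i)) \<in> U}"
      by (intro openin_continuous_map_preimage[OF continuous_map_prodtop_reindex assms(2)]) auto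
  qed (simp add: assms(1) finite_PiE)
  ultimately show ?thesis by (simp only:)
qed

lemma sds_lt_PiE_mem:
  assumes "x \<in> sds_lt I \<alpha> (PiE I Us)" "l \<in> I" "m \<le> \<alpha> l"
  shows "x (l, m) \<in> Us l"
proof -
  define j where "j = (\<lambda>i\<in>I. if i = l then m else 0)"
  have "j \<in> PiE I (\<lambda>i. {..\<alpha> i})" unfolding j_def using assms(3) by auto
  then have "(\<lambda>i\<in>I. x (i, j i)) \<in> PiE I Us" using assms(1) unfolding sds_lt_def by blast
  from PiE_mem[OF this assms(2)] show ?thesis using assms(2) unfolding j_def by simp
qed

lemma sds_lt_box_nbhd_open:
  assumes "finite I" "openin (prodtop I) U"
    and "x \<in> sds_lt I \<alpha> U" "openin (prodtop (SIGMA i:I. {..\<alpha> i})) N" "x \<in> N"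
  obtains V where "\<forall>p\<in>(SIGMA i:I. {..\<alpha> i}). open (V p) \<and> V p \<noteq> {}"
    "PiE (SIGMA i:I. {..\<alpha> i}) V \<subseteq> N \<inter> sds_lt I \<alpha> U"
proof -
  have "openin (prodtop (SIGMA i:I. {..\<alpha> i})) (N \<inter> sds_lt I \<alpha> U)"
    using assms(4) openin_sds_lt[OF assms(1,2)] by (rule openin_Int)
  then obtain V where V: "\<forall>p\<in>(SIGMA i:I. {..\<alpha> i}). openin euclidean (V p)"
      "x \<in> PiE (SIGMA i:I. {..\<alpha> i}) V" "PiE (SIGMA i:I. {..\<alpha> i}) V \<subseteq> N \<inter> sds_lt I \<alpha> U"
    using assms(3,5) unfolding prodtop_def openin_product_topology_alt by blast
  moreover have "V p \<noteq> {}" if "p \<in> (SIGMA i:I. {..\<alpha> i})" for p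
    using PiE_mem[OF V(2) that] by auto
  ultimately show ?thesis using that[of V] open_openin by blast
qed

lemma sds_lt_box_nbhd_PiE:
  assumes Us: "\<forall>i\<in>I. Us i \<subseteq> closure (interior (Us i))"
    and x: "x \<in> sds_lt I \<alpha> (PiE I Us)" and N: "openin (prodtop (SIGMA i:I. {..\<alpha> i})) N" "x \<in> N"
  obtains V where "\<forall>p\<in>(SIGMA i:I. {..\<alpha> i}). open (V p) \<and> V p \<noteq> {}"
    "PiE (SIGMA i:I. {..\<alpha> i}) V \<subseteq> N \<inter> sds_lt I \<alpha> (PiE I Us)"
proof -
  let ?J = "SIGMA i:I. {..\<alpha> i}"
  obtain V where V: "\<forall>p\<in>?J. openin euclidean (V p)" "x \<in> PiE ?J V" "PiE ?J V \<subseteq> N"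
    using N unfolding prodtop_def openin_product_topology_alt by blast
  define V' where "V' p = V p \<inter> interior (Us (fst p))" for p
  have "open (V' p) \<and> V' p \<noteq> {}" if p: "p \<in> ?J" for p
  proof
    show "open (V' p)" unfolding V'_def using V(1) p by auto
    obtain l m where pe: "p = (l, m)" and l: "l \<in> I" and m: "m \<le> \<alpha> l" using p by auto
    have "x p \<in> V p \<inter> closure (interior (Us l))"
      using sds_lt_PiE_mem[OF x l m] Us l V(2) p unfolding pe by auto
    then show "V' p \<noteq> {}"
      using open_Int_closure_eq_empty[of "V p" "interior (Us l)"] V(1) p unfolding V'_def pe by auto
  qed
  moreover have "PiE ?J V' \<subseteq> N \<inter> sds_lt I \<alpha> (PiE I Us)"
  proof
    fix y assume y: "y \<in> PiE ?J V'"
    then have "y \<in> PiE ?J V" unfolding V'_def by (auto simp: PiE_iff)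
    then have "y \<in> N" using V(3) by blast
    moreover have "y (i, j i) \<in> Us i" if "j \<in> PiE I (\<lambda>i. {..\<alpha> i})" "i \<in> I" for i j
      using PiE_mem[OF y, of "(i, j i)"] PiE_mem[OF that] that(2) interior_subset unfolding V'_def by auto
    ultimately show "y \<in> N \<inter> sds_lt I \<alpha> (PiE I Us)"
      using y unfolding sds_lt_def by (auto simp: PiE_iff)
  qed
  ultimately show ?thesis using that by blast
qed

text \<open>
  Every neighbourhood of a point of U^{<\<alpha>>} contains a box of nonempty open, hence infinite, sets
  inside U^{<\<alpha>>}, and such a box contains a point with pairwise distinct coordinates.
\<close>

lemma sds_lt_subset_closure_sds_gt:
  fixes U :: "('i \<Rightarrow> 'k::{field,t2_space}) set"
  assumes tf: "topological_field TYPE('k)" and fin: "finite I"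
    and hU: "openin (prodtop I) U \<or> (\<exists>Us. (\<forall>i\<in>I. Us i \<subseteq> closure (interior (Us i))) \<and> U = PiE I Us)"
  shows "sds_lt I \<alpha> U \<subseteq> prodtop (SIGMA i:I. {..\<alpha> i}) closure_of sds_gt I \<alpha> U"
proof
  let ?J = "SIGMA i:I. {..\<alpha> i}"
  fix x assume x: "x \<in> sds_lt I \<alpha> U"
  have "\<exists>y. y \<in> sds_gt I \<alpha> U \<and> y \<in> N" if N: "openin (prodtop ?J) N" "x \<in> N" for N
  proof -
    obtain V where V: "\<forall>p\<in>?J. open (V p) \<and> V p \<noteq> {}" "PiE ?J V \<subseteq> N \<inter> sds_lt I \<alpha> U"
    proof (cases "openin (prodtop I) U")
      case True
      then show ?thesis using sds_lt_box_nbhd_open[OF fin True x N] that by blast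
    next
      case False
      then obtain Us where Us: "\<forall>i\<in>I. Us i \<subseteq> closure (interior (Us i))" and U: "U = PiE I Us"
        using hU by blast
      show ?thesis using sds_lt_box_nbhd_PiE[OF Us x[unfolded U] N] that unfolding U by blast
    qed
    have "\<forall>p\<in>?J. infinite (V p)" using V(1) topological_field_infinite_open[OF tf] by blast
    then obtain y where y: "y \<in> PiE ?J V" and inj: "inj_on y ?J"
      using inj_on_in_PiE[of ?J V] fin by auto
    then have "y \<in> sds_gt I \<alpha> U" using V(2) unfolding sds_gt_def by (auto simp: inj_on_def)
    then show ?thesis using y V(2) by blast
  qed
  moreover have "x \<in> topspace (prodtop ?J)" using x unfolding sds_lt_def by simp
  ultimately show "x \<in> prodtop ?J closure_of sds_gt I \<alpha> U" unfolding in_closure_of by blast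
qed

lemma is_dd_extension_unique:
  fixes U :: "('i \<Rightarrow> 'k::{field,t2_space}) set" and f :: "('i \<Rightarrow> 'k) \<Rightarrow> 'f::{ab_group_add,t2_space}"
  assumes "topological_field TYPE('k)" "finite I"
    and "openin (prodtop I) U \<or> (\<exists>Us. (\<forall>i\<in>I. Us i \<subseteq> closure (interior (Us i))) \<and> U = PiE I Us)"
    and "is_dd_extension smul I U f \<alpha> g" "is_dd_extension smul I U f \<alpha> h" "x \<in> sds_lt I \<alpha> U"
  shows "g x = h x"
proof (rule forall_in_closure_of_eq[where f = g and g = h])
  have "sds_gt I \<alpha> U \<subseteq> sds_lt I \<alpha> U" unfolding sds_gt_def by auto
  then show "x \<in> subtopology (prodtop (SIGMA i:I. {..\<alpha> i})) (sds_lt I \<alpha> U) closure_of sds_gt I \<alpha> U"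
    using subsetD[OF sds_lt_subset_closure_sds_gt[OF assms(1-3)] assms(6)] assms(6)
    by (simp add: closure_of_subtopology Int_absorb1)
qed (use assms(4,5) Hausdorff_space_euclidean_t2 in \<open>auto simp: is_dd_extension_def\<close>)

section \<open>Hoelder conditions\<close>

lemma holder_cong:
  assumes H: "holder av smul J V g \<sigma>" and eq: "\<forall>x\<in>V. g x = g' x"
  shows "holder av smul J V g' \<sigma>"
  unfolding holder_def
proof (intro ballI allI impI)
  fix x0 q assume "x0 \<in> V" "gaugeF av smul q"
  then obtain p W where pW: "gaugeE av J p" "W \<subseteq> V" "\<exists>N. openin (prodtop J) N \<and> x0 \<in> N \<and> N \<inter> V \<subseteq> W"
     "\<forall>x\<in>W. \<forall>y\<in>W. q (g y - g x) \<le> p (\<lambda>j\<in>J. y j - x j) powr \<sigma>"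
    using H unfolding holder_def by meson
  moreover have "\<forall>x\<in>W. \<forall>y\<in>W. q (g' y - g' x) \<le> p (\<lambda>j\<in>J. y j - x j) powr \<sigma>"
    using pW(2,4) eq by (metis subsetD)
  ultimately show "\<exists>p W. gaugeE av J p \<and> W \<subseteq> V \<and> (\<exists>N. openin (prodtop J) N \<and> x0 \<in> N \<and> N \<inter> V \<subseteq> W) \<and>
      (\<forall>x\<in>W. \<forall>y\<in>W. q (g' y - g' x) \<le> p (\<lambda>j\<in>J. y j - x j) powr \<sigma>)"
    by blast
qed

lemma gaugeE_reindex:
  fixes p :: "('j \<Rightarrow> 'k::{field,topological_space}) \<Rightarrow> real" and \<tau> :: "'j \<Rightarrow> 'i"
  assumes p: "gaugeE av J' p" and \<tau>: "\<And>q. q \<in> J' \<Longrightarrow> \<tau> q \<in> J"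
  shows "gaugeE av J (\<lambda>x. p (\<lambda>q\<in>J'. x (\<tau> q)))"
  unfolding gaugeE_def
proof (intro conjI ballI allI impI)
  fix x :: "'i \<Rightarrow> 'k" and t :: 'k
  have x': "(\<lambda>q\<in>J'. x (\<tau> q)) \<in> PiE J' (\<lambda>_. UNIV)" by simp
  then show "0 \<le> p (\<lambda>q\<in>J'. x (\<tau> q))" using p unfolding gaugeE_def by blast
  have "(\<lambda>q\<in>J'. (\<lambda>j\<in>J. t * x j) (\<tau> q)) = (\<lambda>q\<in>J'. t * (\<lambda>q\<in>J'. x (\<tau> q)) q)"
    using \<tau> by (auto simp: fun_eq_iff)
  moreover have "p (\<lambda>q\<in>J'. t * (\<lambda>q\<in>J'. x (\<tau> q)) q) = av t * p (\<lambda>q\<in>J'. x (\<tau> q))"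
    using p x' unfolding gaugeE_def by blast
  ultimately show "p (\<lambda>q\<in>J'. (\<lambda>j\<in>J. t * x j) (\<tau> q)) = av t * p (\<lambda>q\<in>J'. x (\<tau> q))"
    by (simp only:)
next
  fix r :: real assume "0 < r"
  then obtain S' where S': "openin (prodtop J') S'" "(\<lambda>j\<in>J'. 0) \<in> S'" "\<forall>x\<in>S'. p x < r"
    using p unfolding gaugeE_def by blast
  define S where "S = {x \<in> topspace (prodtop J). (\<lambda>q\<in>J'. x (\<tau> q)) \<in> S'}"
  have zero: "(\<lambda>q\<in>J'. (\<lambda>j\<in>J. 0) (\<tau> q)) = (\<lambda>j\<in>J'. 0)" using \<tau> by (auto simp: fun_eq_iff)
  have "openin (prodtop J) S"
    unfolding S_def by (rule openin_continuous_map_preimage[OF continuous_map_prodtop_reindex S'(1)]) (rule \<tau>)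
  moreover have "(\<lambda>j\<in>J. 0) \<in> S" unfolding S_def mem_Collect_eq zero using S'(2) by simp
  moreover have "\<forall>x\<in>S. p (\<lambda>q\<in>J'. x (\<tau> q)) < r" using S'(3) unfolding S_def by blast
  ultimately show "\<exists>S. openin (prodtop J) S \<and> (\<lambda>j\<in>J. 0) \<in> S \<and> (\<forall>x\<in>S. p (\<lambda>q\<in>J'. x (\<tau> q)) < r)"
    by blast
qed

lemma holder_reindex:
  assumes H: "holder av smul J' V' G \<sigma>" and \<tau>: "\<And>q. q \<in> J' \<Longrightarrow> \<tau> q \<in> J"
    and RV: "\<forall>x\<in>V. (\<lambda>q\<in>J'. x (\<tau> q)) \<in> V'" and VJ: "V \<subseteq> PiE J (\<lambda>_. UNIV)"
  shows "holder av smul J V (\<lambda>x. G (\<lambda>q\<in>J'. x (\<tau> q))) \<sigma>"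
  unfolding holder_def
proof (intro ballI allI impI)
  let ?R = "\<lambda>x. \<lambda>q\<in>J'. x (\<tau> q)"
  fix x0 q assume x0: "x0 \<in> V" and q: "gaugeF av smul q"
  obtain p' W' N' where p': "gaugeE av J' p'" and W': "W' \<subseteq> V'"
    and N': "openin (prodtop J') N'" "?R x0 \<in> N'" "N' \<inter> V' \<subseteq> W'"
    and ineq: "\<forall>x\<in>W'. \<forall>y\<in>W'. q (G y - G x) \<le> p' (\<lambda>j\<in>J'. y j - x j) powr \<sigma>"
    using H RV x0 q unfolding holder_def by meson
  define W where "W = {x\<in>V. ?R x \<in> W'}"
  define N where "N = {x \<in> topspace (prodtop J). ?R x \<in> N'}"
  have "q (G (?R y) - G (?R x)) \<le> p' (?R (\<lambda>j\<in>J. y j - x j)) powr \<sigma>" if "x \<in> W" "y \<in> W" for x y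
  proof -
    have "?R (\<lambda>j\<in>J. y j - x j) = (\<lambda>j\<in>J'. ?R y j - ?R x j)"
      using \<tau> by (auto simp: fun_eq_iff)
    moreover have "q (G (?R y) - G (?R x)) \<le> p' (\<lambda>j\<in>J'. ?R y j - ?R x j) powr \<sigma>"
      using ineq that unfolding W_def by blast
    ultimately show ?thesis by (simp only:)
  qed
  moreover have "openin (prodtop J) N"
    unfolding N_def by (rule openin_continuous_map_preimage[OF continuous_map_prodtop_reindex N'(1)]) (rule \<tau>)
  moreover have "x0 \<in> N" "N \<inter> V \<subseteq> W" "W \<subseteq> V"
    using x0 VJ N'(2,3) RV unfolding N_def W_def by auto
  ultimately show "\<exists>p W. gaugeE av J p \<and> W \<subseteq> V \<and> (\<exists>N. openin (prodtop J) N \<and> x0 \<in> N \<and> N \<inter> V \<subseteq> W) \<and>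
      (\<forall>x\<in>W. \<forall>y\<in>W. q (G (?R y) - G (?R x)) \<le> p (\<lambda>j\<in>J. y j - x j) powr \<sigma>)"
    using gaugeE_reindex[of av J' p' \<tau> J] p' \<tau> by blast
qed

lemma holder_sds_ext_split_pt:
  fixes smul :: "'k::{field,t2_space} \<Rightarrow> 'f \<Rightarrow> 'f::{ab_group_add,t2_space}"
  assumes tf: "topological_field TYPE('k)" and vs: "vector_space smul" and fin: "finite I"
    and hU: "openin (prodtop I) U \<or> (\<exists>Us. (\<forall>i\<in>I. Us i \<subseteq> closure (interior (Us i))) \<and> U = PiE I Us)"
    and f1: "sds_C smul I U f 1" and f_ext: "is_dd_extension smul I U f \<alpha> (sds_ext smul I U f \<alpha>)"
    and i: "i \<in> I" "1 \<le> \<alpha> i"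
    and G_ext: "is_dd_extension smul (SIGMA l:I. {..unitmi i l}) (sds_lt I (unitmi i) U)
        (sds_ext smul I U f (unitmi i)) (split_mi i \<alpha>) G"
    and G_holder: "holder av smul (SIGMA p:(SIGMA l:I. {..unitmi i l}). {..split_mi i \<alpha> p})
        (sds_lt (SIGMA l:I. {..unitmi i l}) (split_mi i \<alpha>) (sds_lt I (unitmi i) U)) G \<sigma>"
  shows "holder av smul (SIGMA l:I. {..\<alpha> l}) (sds_lt I \<alpha> U) (sds_ext smul I U f \<alpha>) \<sigma>"
proof (rule holder_cong)
  show "holder av smul (SIGMA l:I. {..\<alpha> l}) (sds_lt I \<alpha> U) (G \<circ> split_pt I i \<alpha>) \<sigma>"
    unfolding comp_def split_pt_def
  proof (rule holder_reindex[OF G_holder])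
    show "\<forall>x\<in>sds_lt I \<alpha> U. (\<lambda>q\<in>(SIGMA p:(SIGMA l:I. {..unitmi i l}). {..split_mi i \<alpha> p}).
        x (fst (fst q), snd (fst q) + snd q)) \<in> sds_lt (SIGMA l:I. {..unitmi i l}) (split_mi i \<alpha>) (sds_lt I (unitmi i) U)"
      using split_pt_in_sds_lt[where \<alpha> = \<alpha> and I = I and U = U, OF i(2)] by (simp add: split_pt_def)
    show "sds_lt I \<alpha> U \<subseteq> PiE (SIGMA l:I. {..\<alpha> l}) (\<lambda>_. UNIV)"
      unfolding sds_lt_def by blast
    fix q assume "q \<in> (SIGMA p:(SIGMA l:I. {..unitmi i l}). {..split_mi i \<alpha> p})"
    then show "(fst (fst q), snd (fst q) + snd q) \<in> (SIGMA l:I. {..\<alpha> l})"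
      using split_mi_bound[where \<alpha> = \<alpha>, OF i(2)] by auto
  qed
  have "is_dd_extension smul I U f \<alpha> (G \<circ> split_pt I i \<alpha>)"
    by (rule is_dd_extension_split_pt[where \<alpha> = \<alpha>, OF vs fin i f1 G_ext])
  then show "\<forall>x\<in>sds_lt I \<alpha> U. (G \<circ> split_pt I i \<alpha>) x = sds_ext smul I U f \<alpha> x"
    using is_dd_extension_unique[OF tf fin hU _ f_ext] by blast
qed

lemma sds_CH_Suc_from_sds_ext_unitmi:
  fixes smul :: "'k::{field,t2_space} \<Rightarrow> 'f \<Rightarrow> 'f::{ab_group_add,t2_space}"
  assumes tf: "topological_field TYPE('k)" and vs: "vector_space smul" and fin: "finite I"
    and hU: "openin (prodtop I) U \<or> (\<exists>Us. (\<forall>i\<in>I. Us i \<subseteq> closure (interior (Us i))) \<and> U = PiE I Us)"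
    and f1: "sds_CH av smul I U f 1 \<sigma>"
    and unit_CH: "\<forall>i\<in>I. sds_CH av smul (SIGMA l:I. {..unitmi i l}) (sds_lt I (unitmi i) U) (sds_ext smul I U f (unitmi i)) k \<sigma>"
  shows "sds_CH av smul I U f (Suc k) \<sigma>"
proof -
  have C1: "sds_C smul I U f 1" using f1 unfolding sds_CH_def by blast
  have C: "sds_C smul I U f (Suc k)"
    using sds_C_Suc_from_sds_ext_unitmi[OF vs fin C1] unit_CH unfolding sds_CH_def by blast
  have higher: "holder av smul (SIGMA l:I. {..\<alpha> l}) (sds_lt I \<alpha> U) (sds_ext smul I U f \<alpha>) \<sigma>"
    if "1 < sum \<alpha> I" "sum \<alpha> I \<le> Suc k" for \<alpha>
  proof -
    have "0 < sum \<alpha> I" using that(1) by simp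
    then obtain i where i: "i \<in> I" "1 \<le> \<alpha> i" by (rule sum_pos_imp_ex_pos)
    let ?I' = "SIGMA l:I. {..unitmi i l}" and ?U' = "sds_lt I (unitmi i) U"
      and ?g = "sds_ext smul I U f (unitmi i)" and ?\<beta> = "split_mi i \<alpha>"
    have \<beta>: "1 \<le> sum ?\<beta> ?I'" "sum ?\<beta> ?I' \<le> k"
      using sum_split_mi[where \<alpha> = \<alpha>, OF fin i] that by auto
    have g_CH: "sds_CH av smul ?I' ?U' ?g k \<sigma>" using unit_CH i(1) by blast
    then have "is_dd_extension smul ?I' ?U' ?g ?\<beta> (sds_ext smul ?I' ?U' ?g ?\<beta>)"
      and "holder av smul (SIGMA p:?I'. {..?\<beta> p}) (sds_lt ?I' ?\<beta> ?U') (sds_ext smul ?I' ?U' ?g ?\<beta>) \<sigma>"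
      using \<beta> unfolding sds_CH_def by (auto intro: is_dd_extension_sds_ext_le)
    moreover have "is_dd_extension smul I U f \<alpha> (sds_ext smul I U f \<alpha>)"
      using C that by (intro is_dd_extension_sds_ext_le) auto
    ultimately show ?thesis by (intro holder_sds_ext_split_pt[where \<alpha> = \<alpha>, OF tf vs fin hU C1 _ i])
  qed
  show ?thesis
    unfolding sds_CH_def
  proof (intro conjI allI impI)
    fix \<alpha> assume "1 \<le> sum \<alpha> I \<and> sum \<alpha> I \<le> Suc k"
    then show "holder av smul (SIGMA i:I. {..\<alpha> i}) (sds_lt I \<alpha> U) (sds_ext smul I U f \<alpha>) \<sigma>"
      using f1 higher unfolding sds_CH_def by (cases "sum \<alpha> I = 1") auto
  qed (use C f1 in \<open>simp_all add: sds_CH_def\<close>)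
qed

theorem lemma2p2:
  fixes smul :: "'k::{field,t2_space} \<Rightarrow> 'f::{ab_group_add,t2_space} \<Rightarrow> 'f"
    and d k :: nat and U :: "(nat \<Rightarrow> 'k) set" and f :: "(nat \<Rightarrow> 'k) \<Rightarrow> 'f"
  assumes "topological_field TYPE('k)"
    and "tvs smul"
    and "0 < d"
    and "U \<subseteq> PiE {..<d} (\<lambda>_. UNIV)"
    and "openin (prodtop {..<d}) U \<or>
         (\<exists>Us. (\<forall>i<d. Us i \<subseteq> closure (interior (Us i))) \<and> U = PiE {..<d} Us)"
  shows "(sds_C smul {..<d} U f 1 \<and>
          (\<forall>i\<in>{..<d}. sds_C smul (SIGMA l:{..<d}. {..unitmi i l}) (sds_lt {..<d} (unitmi i) U)
                          (sds_ext smul {..<d} U f (unitmi i)) k)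
          \<longrightarrow> sds_C smul {..<d} U f (Suc k))
       \<and> (\<forall>(av :: 'k \<Rightarrow> real) (\<sigma>::real). valued_field av \<and> 0 < \<sigma> \<and>
            sds_CH av smul {..<d} U f 1 \<sigma> \<and>
            (\<forall>i\<in>{..<d}. sds_CH av smul (SIGMA l:{..<d}. {..unitmi i l}) (sds_lt {..<d} (unitmi i) U)
                          (sds_ext smul {..<d} U f (unitmi i)) k \<sigma>)
            \<longrightarrow> sds_CH av smul {..<d} U f (Suc k) \<sigma>)"
proof -
  have vs: "vector_space smul" using assms(2) unfolding tvs_def by simp
  have hU: "openin (prodtop {..<d}) U \<or>
      (\<exists>Us. (\<forall>i\<in>{..<d}. Us i \<subseteq> closure (interior (Us i))) \<and> U = PiE {..<d} Us)"
    using assms(5) by (simp only: Ball_def lessThan_iff)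
  show ?thesis
    using sds_C_Suc_from_sds_ext_unitmi[OF vs finite_lessThan]
      sds_CH_Suc_from_sds_ext_unitmi[OF assms(1) vs finite_lessThan hU] by blast
qed

end
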